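(* Let $a$ and $b$ be relatively prime integers with $1<a<b$, let $(u,v)$ be the definitely least solution of $ax+by=1$, and let $S=\langle a,b\rangle$. Then $\min I(S)=F(S)-(|u|-1)a-(|v|-1)b$.
   Context: $\langle a,b\rangle=\{\lambda_1a+\lambda_2b:\lambda_1,\lambda_2\in\mathbb{N}\}$, with $\mathbb{N}$ the nonnegative integers. $F(S)$ is the Frobenius number of $S$, the largest integer not in $S$. An isolated gap of $S$ is an element $x\in\mathbb{N}\setminus S$ with $x-1,x+1\in S$; $I(S)$ is the set of isolated gaps. The definitely least solution $(u,v)$ of $ax+by=1$ is the unique integer solution with both $|u|$ and $|v|$ minimal; equivalently the solution with $|u|\le b/2$, $|v|\le a/2$. *)

theory Defs
  imports Main
begin

definition gen2 :: "int \<Rightarrow> int \<Rightarrow> int set" where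
  "gen2 a b = {l1 * a + l2 * b | l1 l2. l1 \<ge> 0 \<and> l2 \<ge> 0}"

definition frobenius :: "int set \<Rightarrow> int" where
  "frobenius S = (GREATEST x. x \<notin> S)"

definition isolated_gaps :: "int set \<Rightarrow> int set" where
  "isolated_gaps S = {x. x \<ge> 0 \<and> x \<notin> S \<and> x - 1 \<in> S \<and> x + 1 \<in> S}"

definition definitely_least_solution :: "int \<Rightarrow> int \<Rightarrow> int \<Rightarrow> int \<Rightarrow> bool" where
  "definitely_least_solution a b u v \<longleftrightarrow>
     a * u + b * v = 1 \<and>
     (\<forall>x y. a * x + b * y = 1 \<longrightarrow> \<bar>u\<bar> \<le> \<bar>x\<bar> \<and> \<bar>v\<bar> \<le> \<bar>y\<bar>)"

end

theory Submission
  imports Defs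
begin

text \<open>Every integer can be written as \<open>i * a + j * b\<close> with \<open>0 \<le> j < a\<close>, and it
lies in \<open>\<langle>a, b\<rangle>\<close> exactly when \<open>i \<ge> 0\<close>. Writing \<open>w = \<bar>u\<bar>\<close>, \<open>z = \<bar>v\<bar>\<close>, the definitely least
solution gives \<open>b * z - a * w = d\<close> with \<open>d = \<plusminus>1\<close>, \<open>2 * w \<le> b\<close> and \<open>2 * z \<le> a\<close>. Then
\<open>x\<^sub>0 = (-w) * a + (a - z) * b\<close> is a gap whose neighbours \<open>x\<^sub>0 - d = (a - 2 * z) * b\<close> and
\<open>x\<^sub>0 + d = (b - 2 * w) * a\<close> lie in \<open>\<langle>a, b\<rangle>\<close>. Conversely, for an isolated gap \<open>x = i * a + j * b\<close>
in normal form, \<open>x + d = (i - w) * a + (j + z) * b\<close> forces \<open>j + z \<ge> a\<close>, and then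
\<open>x - d = (i + w) * a + (j - z) * b\<close> is in normal form and forces \<open>i \<ge> -w\<close>; hence \<open>x \<ge> x\<^sub>0\<close>.
Finally \<open>x\<^sub>0 = F(S) - (w - 1) * a - (z - 1) * b\<close> because \<open>F(S) = a * b - a - b\<close>.\<close>

lemma gen2_normal_form:
  fixes a b n :: int
  assumes "coprime a b" "0 < a"
  obtains i j where "n = i * a + j * b" "0 \<le> j" "j < a"
proof -
  obtain u v where uv: "u * a + v * b = 1"
    using bezout_int[of a b] assms(1) by (auto simp: coprime_iff_gcd_eq_1)
  define q r where "q = (n * v) div a" and "r = (n * v) mod a"
  have qr: "n * v = q * a + r" unfolding q_def r_def by simp
  have "n = (n * u) * a + (n * v) * b" using uv by (metis mult.assoc distrib_left mult_1_right)
  also have "\<dots> = (n * u + b * q) * a + r * b" unfolding qr by (simp add: algebra_simps)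
  finally have "n = (n * u + b * q) * a + r * b" .
  moreover have "0 \<le> r" "r < a" unfolding r_def using assms(2) by simp_all
  ultimately show ?thesis using that by blast
qed

lemma mem_gen2_normal_form_iff:
  fixes a b i j :: int
  assumes "coprime a b" "0 < a" "0 < b" "0 \<le> j" "j < a"
  shows "i * a + j * b \<in> gen2 a b \<longleftrightarrow> 0 \<le> i"
proof
  assume "i * a + j * b \<in> gen2 a b"
  then obtain p q where pq: "i * a + j * b = p * a + q * b" "0 \<le> p" "0 \<le> q"
    unfolding gen2_def by auto
  show "0 \<le> i"
  proof (rule ccontr)
    assume "\<not> 0 \<le> i"
    have swap: "(p - i) * a = (j - q) * b" using pq(1) by (simp add: algebra_simps)
    moreover have "0 < (p - i) * a" using \<open>\<not> 0 \<le> i\<close> pq(2) assms(2) by simp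
    ultimately have "0 < j - q" using assms(3) by (simp add: zero_less_mult_iff)
    moreover have "a dvd j - q"
      using swap assms(1) by (metis dvd_triv_left coprime_dvd_mult_left_iff mult.commute)
    ultimately have "a \<le> j - q" by (simp add: zdvd_imp_le)
    then show False using assms(5) pq(3) by simp
  qed
next
  assume "0 \<le> i"
  then show "i * a + j * b \<in> gen2 a b" unfolding gen2_def using assms(4) by auto
qed

lemma gap_gen2_normal_form:
  fixes a b x :: int
  assumes "coprime a b" "0 < a" "0 < b" "x \<notin> gen2 a b"
  obtains i j where "x = i * a + j * b" "0 \<le> j" "j < a" "i < 0"
proof -
  obtain i j where ij: "x = i * a + j * b" "0 \<le> j" "j < a"
    using gen2_normal_form assms(1,2) by blast
  then have "i < 0" using mem_gen2_normal_form_iff[OF assms(1-3)] assms(4) by force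
  then show ?thesis using that ij by blast
qed

lemma gap_gen2_le:
  fixes a b x :: int
  assumes "coprime a b" "0 < a" "0 < b" "x \<notin> gen2 a b"
  shows "x \<le> a * b - a - b"
proof -
  obtain i j where ij: "x = i * a + j * b" "0 \<le> j" "j < a" "i < 0"
    using gap_gen2_normal_form assms by blast
  have "i * a \<le> (-1) * a" using ij assms(2) by (intro mult_right_mono) auto
  moreover have "j * b \<le> (a - 1) * b" using ij assms(3) by (intro mult_right_mono) auto
  ultimately show ?thesis using ij by (simp add: algebra_simps)
qed

lemma frobenius_gen2:
  fixes a b :: int
  assumes "coprime a b" "0 < a" "0 < b"
  shows "frobenius (gen2 a b) = a * b - a - b"
  unfolding frobenius_def
proof (rule Greatest_equality)
  have "(-1) * a + (a - 1) * b \<notin> gen2 a b"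
    using mem_gen2_normal_form_iff[OF assms, of "a - 1" "-1"] assms by simp
  then show "a * b - a - b \<notin> gen2 a b" by (simp add: algebra_simps)
qed (use gap_gen2_le assms in blast)

lemma finite_isolated_gaps_gen2:
  fixes a b :: int
  assumes "coprime a b" "0 < a" "0 < b"
  shows "finite (isolated_gaps (gen2 a b))"
proof (rule finite_subset)
  show "isolated_gaps (gen2 a b) \<subseteq> {0 .. a * b - a - b}"
    using gap_gen2_le[OF assms] unfolding isolated_gaps_def by auto
qed simp

lemma neighbours_mem_iff_abs_one:
  fixes d x :: int
  assumes "\<bar>d\<bar> = 1"
  shows "x - 1 \<in> S \<and> x + 1 \<in> S \<longleftrightarrow> x - d \<in> S \<and> x + d \<in> S"
  using assms by (cases "d = 1") (auto simp: abs_if split: if_splits)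

lemma isolated_gap_gen2_witness:
  fixes a b w z :: int
  assumes "coprime a b" "0 < a" "0 < b" "1 \<le> w" "1 \<le> z" "2 * w \<le> b" "2 * z \<le> a"
    and d: "\<bar>b * z - a * w\<bar> = 1"
  shows "(-w) * a + (a - z) * b \<in> isolated_gaps (gen2 a b)"
proof -
  let ?x = "(-w) * a + (a - z) * b" and ?d = "b * z - a * w"
  note mem_iff = mem_gen2_normal_form_iff[OF assms(1-3)]
  have gap: "?x \<notin> gen2 a b" using mem_iff[of "a - z" "-w"] assms(4,5,7) by simp
  have lower: "?x - ?d = 0 * a + (a - 2 * z) * b" by (simp add: algebra_simps)
  have upper: "?x + ?d = (b - 2 * w) * a + 0 * b" by (simp add: algebra_simps)
  have "?x - ?d \<in> gen2 a b" "?x + ?d \<in> gen2 a b"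
    unfolding lower upper using mem_iff[of "a - 2 * z" 0] mem_iff[of 0 "b - 2 * w"] assms(2,5-7)
    by simp_all
  then have neighbours: "?x - 1 \<in> gen2 a b \<and> ?x + 1 \<in> gen2 a b"
    using neighbours_mem_iff_abs_one[OF d] by blast
  have "0 \<le> (a - 2 * z) * b" "0 \<le> (b - 2 * w) * a" using assms(2,3,6,7) by simp_all
  then have "0 \<le> ?x" using lower upper d by linarith
  then show ?thesis using gap neighbours unfolding isolated_gaps_def by simp
qed

lemma isolated_gap_gen2_lower_bound:
  fixes a b w z x :: int
  assumes "coprime a b" "0 < a" "0 < b" "0 \<le> w" "0 \<le> z" "2 * z \<le> a"
    and d: "\<bar>b * z - a * w\<bar> = 1"
    and x: "x \<in> isolated_gaps (gen2 a b)"
  shows "(-w) * a + (a - z) * b \<le> x"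
proof -
  let ?d = "b * z - a * w"
  note mem_iff = mem_gen2_normal_form_iff[OF assms(1-3)]
  have "x \<notin> gen2 a b" and neighbours: "x - ?d \<in> gen2 a b" "x + ?d \<in> gen2 a b"
    using x neighbours_mem_iff_abs_one[OF d, of x] unfolding isolated_gaps_def by auto
  then obtain i j where ij: "x = i * a + j * b" "0 \<le> j" "j < a" "i < 0"
    using gap_gen2_normal_form assms(1-3) by blast
  have "x + ?d = (i - w) * a + (j + z) * b" using ij(1) by (simp add: algebra_simps)
  then have "a \<le> j + z" using neighbours(2) mem_iff[of "j + z" "i - w"] ij assms(4,5) by force
  have "x - ?d = (i + w) * a + (j - z) * b" using ij(1) by (simp add: algebra_simps)
  then have "-w \<le> i"
    using neighbours(1) mem_iff[of "j - z" "i + w"] \<open>a \<le> j + z\<close> ij(3) assms(5,6) by simp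
  then have "(-w) * a \<le> i * a" using assms(2) by (intro mult_right_mono) simp_all
  moreover have "(a - z) * b \<le> j * b" using \<open>a \<le> j + z\<close> assms(3) by simp
  ultimately show ?thesis using ij(1) by linarith
qed

lemma bezout_abs_coeffs:
  fixes a b u v :: int
  assumes "1 < a" "1 < b" "a * u + b * v = 1"
  shows "\<bar>b * \<bar>v\<bar> - a * \<bar>u\<bar>\<bar> = 1" "u \<noteq> 0" "v \<noteq> 0"
proof -
  have "u \<noteq> 0" "v \<noteq> 0" using assms by (auto simp: zmult_eq_1_iff)
  moreover have "\<not> (0 < u \<and> 0 < v)"
  proof
    assume "0 < u \<and> 0 < v"
    then have "a \<le> a * u" "b \<le> b * v" using assms(1,2) by simp_all
    then show False using assms by linarith
  qed
  moreover have "\<not> (u < 0 \<and> v < 0)"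
  proof
    assume "u < 0 \<and> v < 0"
    then have "a * u < 0" "b * v < 0" using assms(1,2) by (simp_all add: mult_pos_neg)
    then show False using assms(3) by linarith
  qed
  ultimately show "\<bar>b * \<bar>v\<bar> - a * \<bar>u\<bar>\<bar> = 1" "u \<noteq> 0" "v \<noteq> 0"
    using assms(3) by (auto simp: abs_if)
qed

lemma definitely_least_solution_abs_le:
  fixes a b u v :: int
  assumes "definitely_least_solution a b u v" "0 < a" "0 < b"
  shows "2 * \<bar>u\<bar> \<le> b" "2 * \<bar>v\<bar> \<le> a"
proof -
  have uv: "a * u + b * v = 1"
    and least: "\<And>x y. a * x + b * y = 1 \<Longrightarrow> \<bar>u\<bar> \<le> \<bar>x\<bar> \<and> \<bar>v\<bar> \<le> \<bar>y\<bar>"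
    using assms(1) unfolding definitely_least_solution_def by auto
  have "a * (u + b) + b * (v - a) = 1" "a * (u - b) + b * (v + a) = 1"
    using uv by (simp_all add: algebra_simps)
  then have "\<bar>u\<bar> \<le> \<bar>u + b\<bar>" "\<bar>u\<bar> \<le> \<bar>u - b\<bar>" "\<bar>v\<bar> \<le> \<bar>v - a\<bar>" "\<bar>v\<bar> \<le> \<bar>v + a\<bar>"
    using least by blast+
  then show "2 * \<bar>u\<bar> \<le> b" "2 * \<bar>v\<bar> \<le> a" using assms(2,3) by linarith+
qed

theorem proposition4p9:
  fixes a b u v :: int
  assumes "coprime a b" and "1 < a" and "a < b"
    and "definitely_least_solution a b u v"
  shows "isolated_gaps (gen2 a b) \<noteq> {} \<and>
         Min (isolated_gaps (gen2 a b)) =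
           frobenius (gen2 a b) - (\<bar>u\<bar> - 1) * a - (\<bar>v\<bar> - 1) * b"
proof -
  have a: "0 < a" and b: "1 < b" and b0: "0 < b" using assms(2,3) by simp_all
  have uv: "a * u + b * v = 1" using assms(4) unfolding definitely_least_solution_def by simp
  note abs_coeffs = bezout_abs_coeffs[OF assms(2) b uv]
  note abs_le = definitely_least_solution_abs_le[OF assms(4) a b0]
  let ?x = "(- \<bar>u\<bar>) * a + (a - \<bar>v\<bar>) * b"
  have witness: "?x \<in> isolated_gaps (gen2 a b)"
    using isolated_gap_gen2_witness assms(1) a b0 abs_coeffs abs_le by simp
  have "Min (isolated_gaps (gen2 a b)) = ?x"
  proof (rule Min_eqI)
    show "finite (isolated_gaps (gen2 a b))" using finite_isolated_gaps_gen2 assms(1) a b0 by blast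
  qed (use witness isolated_gap_gen2_lower_bound assms(1) a b0 abs_coeffs(1) abs_le in auto)
  moreover have "frobenius (gen2 a b) = a * b - a - b" using frobenius_gen2 assms(1) a b0 by blast
  ultimately show ?thesis using witness by (auto simp: algebra_simps)
qed

end
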